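(* Let $G$ be a finite quasiprimitive permutation group of O'Nan–Scott type $\mathrm{SD}$ or $\mathrm{CD}$, and let $M$ be a point stabilizer. Then $M$ is a perfect code of $G$.
   Context: A permutation group is quasiprimitive if every non-trivial normal subgroup is transitive; the types $\mathrm{SD}$ (simple diagonal) and $\mathrm{CD}$ (compound diagonal) are those of Praeger's O'Nan–Scott classification of quasiprimitive groups (1997). For a group $G$ with identity $e$ and an inverse-closed subset $S\subseteq G\setminus\{e\}$, the Cayley graph $\mathrm{Cay}(G,S)$ has vertex set $G$ and edges $\{g,sg\}$ for $s\in S$, $g\in G$. A perfect code in a graph is an independent set $C$ of vertices such that every vertex outside $C$ is adjacent to exactly one vertex of $C$. A subgroup $H$ of $G$ is a perfect code of $G$ if some Cayley graph of $G$ admits $H$ as a perfect code. *)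

theory Defs
  imports "HOL-Algebra.Algebra"
begin

definition cayley_adj :: "('a, 'b) monoid_scheme \<Rightarrow> 'a set \<Rightarrow> 'a \<Rightarrow> 'a \<Rightarrow> bool" where
  "cayley_adj G S x y \<longleftrightarrow>
     x \<in> carrier G \<and> y \<in> carrier G \<and>
     ((\<exists>s\<in>S. y = s \<otimes>\<^bsub>G\<^esub> x) \<or> (\<exists>s\<in>S. x = s \<otimes>\<^bsub>G\<^esub> y))"

definition perfect_code_graph :: "'a set \<Rightarrow> ('a \<Rightarrow> 'a \<Rightarrow> bool) \<Rightarrow> 'a set \<Rightarrow> bool" where
  "perfect_code_graph V adj C \<longleftrightarrow>
     C \<subseteq> V \<and>
     (\<forall>x\<in>C. \<forall>y\<in>C. \<not> adj x y) \<and>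
     (\<forall>v\<in>V - C. \<exists>!c. c \<in> C \<and> adj v c)"

definition subgroup_perfect_code :: "('a, 'b) monoid_scheme \<Rightarrow> 'a set \<Rightarrow> bool" where
  "subgroup_perfect_code G H \<longleftrightarrow>
     subgroup H G \<and>
     (\<exists>S. S \<subseteq> carrier G - {\<one>\<^bsub>G\<^esub>} \<and> (\<forall>s\<in>S. inv\<^bsub>G\<^esub> s \<in> S) \<and>
          perfect_code_graph (carrier G) (cayley_adj G S) H)"

definition quasiprimitive :: "('a, 'b) monoid_scheme \<Rightarrow> 'c set \<Rightarrow> ('a \<Rightarrow> 'c \<Rightarrow> 'c) \<Rightarrow> bool" where
  "quasiprimitive G \<Omega> \<phi> \<longleftrightarrow>
     (\<forall>N. N \<lhd> G \<and> N \<noteq> {\<one>\<^bsub>G\<^esub>} \<longrightarrow> (\<forall>x\<in>\<Omega>. \<forall>y\<in>\<Omega>. \<exists>g\<in>N. \<phi> g x = y))"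

definition minimal_normal :: "('a, 'b) monoid_scheme \<Rightarrow> 'a set \<Rightarrow> bool" where
  "minimal_normal G N \<longleftrightarrow>
     N \<lhd> G \<and> N \<noteq> {\<one>\<^bsub>G\<^esub>} \<and>
     (\<forall>K. K \<lhd> G \<and> K \<subseteq> N \<longrightarrow> K = {\<one>\<^bsub>G\<^esub>} \<or> K = N)"

definition socle :: "('a, 'b) monoid_scheme \<Rightarrow> 'a set" where
  "socle G = generate G (\<Union>{N. minimal_normal G N})"

definition nonabelian_simple_subgroup :: "('a, 'b) monoid_scheme \<Rightarrow> 'a set \<Rightarrow> bool" where
  "nonabelian_simple_subgroup G T \<longleftrightarrow>
     subgroup T G \<and> simple_group (G\<lparr>carrier := T\<rparr>) \<and>
     (\<exists>x\<in>T. \<exists>y\<in>T. x \<otimes>\<^bsub>G\<^esub> y \<noteq> y \<otimes>\<^bsub>G\<^esub> x)"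

definition prod_of :: "('a, 'b) monoid_scheme \<Rightarrow> ('i \<Rightarrow> 'a set) \<Rightarrow> 'i set \<Rightarrow> 'a set" where
  "prod_of G T I = generate G (\<Union>i\<in>I. T i)"

definition internal_dir_prod :: "('a, 'b) monoid_scheme \<Rightarrow> ('i \<Rightarrow> 'a set) \<Rightarrow> 'i set \<Rightarrow> 'a set \<Rightarrow> bool" where
  "internal_dir_prod G T I N \<longleftrightarrow>
     (\<forall>i\<in>I. subgroup (T i) G) \<and>
     (\<forall>i\<in>I. \<forall>j\<in>I. i \<noteq> j \<longrightarrow> (\<forall>x\<in>T i. \<forall>y\<in>T j. x \<otimes>\<^bsub>G\<^esub> y = y \<otimes>\<^bsub>G\<^esub> x)) \<and>
     (\<forall>i\<in>I. T i \<inter> prod_of G T (I - {i}) = {\<one>\<^bsub>G\<^esub>}) \<and>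
     N = prod_of G T I"

text \<open>D is a full diagonal subgroup of the direct product of the T i, i in B:
  every coordinate projection restricted to D is an isomorphism onto its factor.
  The kernel of the projection onto T i is the product of the other factors, so
  injectivity means trivial intersection with it and surjectivity means that D
  together with it generates (as a product set) the whole product.\<close>
definition full_diagonal :: "('a, 'b) monoid_scheme \<Rightarrow> ('i \<Rightarrow> 'a set) \<Rightarrow> 'i set \<Rightarrow> 'a set \<Rightarrow> bool" where
  "full_diagonal G T B D \<longleftrightarrow>
     subgroup D G \<and> D \<subseteq> prod_of G T B \<and>
     (\<forall>i\<in>B. D \<inter> prod_of G T (B - {i}) = {\<one>\<^bsub>G\<^esub>} \<and>
             D <#>\<^bsub>G\<^esub> prod_of G T (B - {i}) = prod_of G T B)"

definition type_SD :: "('a, 'b) monoid_scheme \<Rightarrow> 'c set \<Rightarrow> ('a \<Rightarrow> 'c \<Rightarrow> 'c) \<Rightarrow> bool" where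
  "type_SD G \<Omega> \<phi> \<longleftrightarrow>
     (\<exists>k::nat. \<exists>T. k \<ge> 2 \<and>
        (\<forall>i<k. nonabelian_simple_subgroup G (T i)) \<and>
        internal_dir_prod G T {..<k} (socle G) \<and>
        (\<forall>\<alpha>\<in>\<Omega>. full_diagonal G T {..<k} (socle G \<inter> stabilizer G \<phi> \<alpha>)))"

definition type_CD :: "('a, 'b) monoid_scheme \<Rightarrow> 'c set \<Rightarrow> ('a \<Rightarrow> 'c \<Rightarrow> 'c) \<Rightarrow> bool" where
  "type_CD G \<Omega> \<phi> \<longleftrightarrow>
     (\<exists>k::nat. \<exists>T.
        (\<forall>i<k. nonabelian_simple_subgroup G (T i)) \<and>
        internal_dir_prod G T {..<k} (socle G) \<and>
        (\<forall>\<alpha>\<in>\<Omega>. \<exists>l::nat. \<exists>B::nat \<Rightarrow> nat set. \<exists>D::nat \<Rightarrow> 'a set.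
            l \<ge> 2 \<and> l dvd k \<and> k div l \<ge> 2 \<and>
            (\<forall>j<l. B j \<subseteq> {..<k} \<and> card (B j) = k div l) \<and>
            (\<forall>j<l. \<forall>j'<l. j \<noteq> j' \<longrightarrow> B j \<inter> B j' = {}) \<and>
            (\<Union>j<l. B j) = {..<k} \<and>
            (\<forall>j<l. full_diagonal G T (B j) (D j)) \<and>
            socle G \<inter> stabilizer G \<phi> \<alpha> = prod_of G D {..<l}))"

end

theory Submission
  imports Defs
begin

text \<open>
  Let \<open>N\<close> be the socle and \<open>H\<close> the stabilizer of \<open>\<alpha>\<close>. In types SD and CD,
  \<open>N = T\<^sub>1 \<times> \<dots> \<times> T\<^sub>k\<close> and \<open>N \<inter> H\<close> is the product of full diagonal subgroups
  \<open>D\<^sub>j\<close> of the products of the \<open>T\<^sub>i\<close> over blocks \<open>B\<^sub>j\<close> partitioning the indices.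
  Dropping one simple factor from each block yields a subgroup \<open>K\<close> of \<open>N\<close> with
  \<open>(N \<inter> H) K = N\<close> and \<open>N \<inter> H \<inter> K = 1\<close>.
  Quasiprimitivity makes \<open>N\<close> transitive, so \<open>G = N H\<close> (Frattini argument) and hence
  \<open>G = K H\<close> with \<open>K \<inter> H = 1\<close>. Such a complement makes \<open>H\<close> a perfect code of
  \<open>Cay(G, K - {1})\<close>: every \<open>g = k h\<close> is adjacent to exactly one element of \<open>H\<close>,
  namely \<open>h\<close>.
\<close>

definition complementary :: "('a, 'b) monoid_scheme \<Rightarrow> 'a set \<Rightarrow> 'a set \<Rightarrow> 'a set \<Rightarrow> bool" where
  "complementary G N H K \<longleftrightarrow> H <#>\<^bsub>G\<^esub> K = N \<and> H \<inter> K = {\<one>\<^bsub>G\<^esub>}"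

context group
begin

section \<open>Products of commuting subgroups\<close>

lemma set_multI: "a \<in> A \<Longrightarrow> b \<in> B \<Longrightarrow> a \<otimes> b \<in> A <#> B"
  unfolding set_mult_def by blast

lemma set_multE:
  assumes "x \<in> A <#> B"
  obtains a b where "a \<in> A" "b \<in> B" "x = a \<otimes> b"
  using assms unfolding set_mult_def by blast

lemma centralizer_subgroup:
  assumes "y \<in> carrier G"
  shows "subgroup {x \<in> carrier G. x \<otimes> y = y \<otimes> x} G"
proof (rule subgroupI)
  fix x assume "x \<in> {x \<in> carrier G. x \<otimes> y = y \<otimes> x}"
  then have x: "x \<in> carrier G" "x \<otimes> y = y \<otimes> x" by auto
  have "inv x \<otimes> y = inv x \<otimes> (y \<otimes> x) \<otimes> inv x"
    using x assms by (simp add: m_assoc)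
  also have "\<dots> = y \<otimes> inv x"
    using x(1) assms by (simp add: x(2)[symmetric] flip: m_assoc)
  finally show "inv x \<in> {x \<in> carrier G. x \<otimes> y = y \<otimes> x}" using x by simp
next
  fix x z assume "x \<in> {x \<in> carrier G. x \<otimes> y = y \<otimes> x}" "z \<in> {x \<in> carrier G. x \<otimes> y = y \<otimes> x}"
  then show "x \<otimes> z \<in> {x \<in> carrier G. x \<otimes> y = y \<otimes> x}"
    using assms by (auto simp: m_assoc) (simp flip: m_assoc)
qed (use assms in auto)

lemma generate_commute:
  assumes A: "A \<subseteq> carrier G" and B: "B \<subseteq> carrier G"
    and AB: "\<And>a b. a \<in> A \<Longrightarrow> b \<in> B \<Longrightarrow> a \<otimes> b = b \<otimes> a"
    and x: "x \<in> generate G A" and y: "y \<in> generate G B"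
  shows "x \<otimes> y = y \<otimes> x"
proof -
  have "generate G A \<subseteq> {x \<in> carrier G. x \<otimes> b = b \<otimes> x}" if "b \<in> B" for b
    using that A B AB by (intro generate_subgroup_incl centralizer_subgroup) auto
  then have "B \<subseteq> {y \<in> carrier G. y \<otimes> x = x \<otimes> y}"
    using x B by force
  then have "generate G B \<subseteq> {y \<in> carrier G. y \<otimes> x = x \<otimes> y}"
    using generate_in_carrier[OF A x] by (intro generate_subgroup_incl centralizer_subgroup)
  then show ?thesis using y by auto
qed

lemma set_mult_commute_elementwise:
  assumes "\<And>a b. a \<in> A \<Longrightarrow> b \<in> B \<Longrightarrow> a \<otimes> b = b \<otimes> a"
  shows "A <#> B = B <#> A"
proof -
  have "A <#> B = (\<Union>a\<in>A. \<Union>b\<in>B. {b \<otimes> a})"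
    unfolding set_mult_def using assms by (intro SUP_cong refl) simp
  also have "\<dots> = B <#> A"
    unfolding set_mult_def by (rule SUP_commute)
  finally show ?thesis .
qed

lemma subgroup_set_mult_commuting:
  assumes A: "subgroup A G" and B: "subgroup B G"
    and AB: "\<And>a b. a \<in> A \<Longrightarrow> b \<in> B \<Longrightarrow> a \<otimes> b = b \<otimes> a"
  shows "subgroup (A <#> B) G"
proof (rule subgroupI)
  show "A <#> B \<subseteq> carrier G"
    using set_mult_closed[OF subgroup.subset[OF A] subgroup.subset[OF B]] .
  show "A <#> B \<noteq> {}"
    using set_multI[OF subgroup.one_closed[OF A] subgroup.one_closed[OF B]] by blast
next
  fix x assume "x \<in> A <#> B"
  then obtain a b where ab: "a \<in> A" "b \<in> B" and x: "x = a \<otimes> b"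
    by (rule set_multE)
  have "inv x = inv b \<otimes> inv a"
    using ab A B x by (simp add: inv_mult_group subgroup.mem_carrier)
  also have "\<dots> = inv a \<otimes> inv b"
    using AB[OF subgroup.m_inv_closed[OF A ab(1)] subgroup.m_inv_closed[OF B ab(2)]] by (rule sym)
  finally show "inv x \<in> A <#> B"
    using set_multI[OF subgroup.m_inv_closed[OF A ab(1)] subgroup.m_inv_closed[OF B ab(2)]] by simp
next
  fix x y assume "x \<in> A <#> B" "y \<in> A <#> B"
  then obtain a b a' b' where ab: "a \<in> A" "b \<in> B" "a' \<in> A" "b' \<in> B"
    and x: "x = a \<otimes> b" and y: "y = a' \<otimes> b'"
    by (metis set_multE)
  have carr: "a \<in> carrier G" "b \<in> carrier G" "a' \<in> carrier G" "b' \<in> carrier G"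
    using ab subgroup.mem_carrier[OF A] subgroup.mem_carrier[OF B] by auto
  have "x \<otimes> y = a \<otimes> (b \<otimes> a') \<otimes> b'"
    using x y carr by (simp add: m_assoc)
  also have "\<dots> = a \<otimes> (a' \<otimes> b) \<otimes> b'"
    using AB[of a' b] ab by simp
  also have "\<dots> = (a \<otimes> a') \<otimes> (b \<otimes> b')"
    using carr by (simp add: m_assoc)
  finally show "x \<otimes> y \<in> A <#> B"
    using set_multI[OF subgroup.m_closed[OF A ab(1,3)] subgroup.m_closed[OF B ab(2,4)]] by simp
qed

lemma generate_Un_commuting_subgroups:
  assumes A: "subgroup A G" and B: "subgroup B G"
    and AB: "\<And>a b. a \<in> A \<Longrightarrow> b \<in> B \<Longrightarrow> a \<otimes> b = b \<otimes> a"
  shows "generate G (A \<union> B) = A <#> B"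
proof
  have "A \<union> B \<subseteq> A <#> B"
  proof
    fix x assume "x \<in> A \<union> B"
    then consider (in_A) "x \<in> A" | (in_B) "x \<in> B"
      by blast
    then show "x \<in> A <#> B"
    proof cases
      case in_A
      then show ?thesis
        using set_multI[OF in_A subgroup.one_closed[OF B]] subgroup.mem_carrier[OF A in_A] by simp
    next
      case in_B
      then show ?thesis
        using set_multI[OF subgroup.one_closed[OF A] in_B] subgroup.mem_carrier[OF B in_B] by simp
    qed
  qed
  then show "generate G (A \<union> B) \<subseteq> A <#> B"
    by (intro generate_subgroup_incl subgroup_set_mult_commuting A B AB)
  show "A <#> B \<subseteq> generate G (A \<union> B)"
    unfolding set_mult_def by (auto intro: generate.eng generate.incl)
qed

lemma generate_Un_generate:
  assumes "U \<subseteq> carrier G" and "V \<subseteq> carrier G"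
  shows "generate G (generate G U \<union> generate G V) = generate G (U \<union> V)"
proof
  have "generate G U \<union> generate G V \<subseteq> generate G (U \<union> V)"
    using mono_generate[of U "U \<union> V"] mono_generate[of V "U \<union> V"] by blast
  then show "generate G (generate G U \<union> generate G V) \<subseteq> generate G (U \<union> V)"
    using assms by (intro generate_subgroup_incl generate_is_subgroup) auto
  show "generate G (U \<union> V) \<subseteq> generate G (generate G U \<union> generate G V)"
    by (intro mono_generate) (auto intro: generate.incl)
qed

lemma set_mult_inter_trivial:
  assumes A: "subgroup A G" and B: "subgroup B G" and C: "subgroup C G" and M: "subgroup M G"
    and "B \<subseteq> M" "C \<subseteq> M" "A \<inter> M = {\<one>}" "B \<inter> C = {\<one>}"
  shows "(A <#> B) \<inter> C = {\<one>}"
proof -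
  have "x = \<one>" if x: "x \<in> A <#> B" "x \<in> C" for x
  proof -
    obtain a b where a: "a \<in> A" and b: "b \<in> B" and xab: "x = a \<otimes> b"
      using x(1) by (rule set_multE)
    have carr: "a \<in> carrier G" "b \<in> carrier G"
      using subgroup.mem_carrier[OF A a] subgroup.mem_carrier[OF B b] .
    have "x \<otimes> inv b \<in> M"
      using x(2) b assms(5,6) subgroup.m_closed[OF M] subgroup.m_inv_closed[OF M] by blast
    moreover have "x \<otimes> inv b = a"
      using xab carr by (simp add: m_assoc)
    ultimately have "a = \<one>"
      using a assms(7) by blast
    then show "x = \<one>"
      using xab carr b x(2) assms(8) by auto
  qed
  moreover have "\<one> \<in> A <#> B"
    using set_multI[OF subgroup.one_closed[OF A] subgroup.one_closed[OF B]] by simp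
  ultimately show ?thesis
    using subgroup.one_closed[OF C] by blast
qed

lemma prod_of_subgroup:
  assumes "\<And>j. j \<in> J \<Longrightarrow> subgroup (W j) G"
  shows "subgroup (prod_of G W J) G"
  unfolding prod_of_def using assms subgroup.subset by (intro generate_is_subgroup) blast

lemma subset_prod_of: "j \<in> J \<Longrightarrow> W j \<subseteq> prod_of G W J"
  unfolding prod_of_def by (auto intro: generate.incl)

lemma prod_of_mono: "J \<subseteq> J' \<Longrightarrow> prod_of G W J \<subseteq> prod_of G W J'"
  unfolding prod_of_def by (rule mono_generate) blast

lemma prod_of_empty [simp]: "prod_of G W {} = {\<one>}"
  unfolding prod_of_def by (simp add: generate_empty)

lemma prod_of_singleton:
  assumes "subgroup (W a) G"
  shows "prod_of G W {a} = W a"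
  unfolding prod_of_def
  using assms generate_subgroup_incl[of "W a" "W a"] by (auto intro: generate.incl)

lemma prod_of_Un:
  assumes sub: "\<And>j. j \<in> I \<union> J \<Longrightarrow> subgroup (W j) G"
    and comm: "\<And>i j x y. i \<in> I \<Longrightarrow> j \<in> J \<Longrightarrow> x \<in> W i \<Longrightarrow> y \<in> W j \<Longrightarrow> x \<otimes> y = y \<otimes> x"
  shows "prod_of G W (I \<union> J) = prod_of G W I <#> prod_of G W J"
proof -
  have carr: "(\<Union>j\<in>I. W j) \<subseteq> carrier G" "(\<Union>j\<in>J. W j) \<subseteq> carrier G"
    using sub subgroup.subset by blast+
  have "prod_of G W (I \<union> J) = generate G (prod_of G W I \<union> prod_of G W J)"
    unfolding prod_of_def using generate_Un_generate[OF carr] by (simp add: UN_Un)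
  also have "\<dots> = prod_of G W I <#> prod_of G W J"
  proof (rule generate_Un_commuting_subgroups)
    show "subgroup (prod_of G W I) G" "subgroup (prod_of G W J) G"
      using sub by (auto intro: prod_of_subgroup)
    show "x \<otimes> y = y \<otimes> x" if "x \<in> prod_of G W I" "y \<in> prod_of G W J" for x y
      using generate_commute[OF carr _ that[unfolded prod_of_def]] comm by blast
  qed
  finally show ?thesis .
qed

lemma one_in_prod_of: "\<one> \<in> prod_of G W J"
  unfolding prod_of_def by (rule generate.one)

lemma prod_of_insert:
  assumes "\<And>j. j \<in> insert a J \<Longrightarrow> subgroup (W j) G"
    and "\<And>j x y. j \<in> J \<Longrightarrow> x \<in> W a \<Longrightarrow> y \<in> W j \<Longrightarrow> x \<otimes> y = y \<otimes> x"
  shows "prod_of G W (insert a J) = W a <#> prod_of G W J"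
proof -
  have "prod_of G W ({a} \<union> J) = prod_of G W {a} <#> prod_of G W J"
    by (rule prod_of_Un) (use assms in auto)
  then show ?thesis
    using prod_of_singleton[of W a] assms by simp
qed

section \<open>Internal direct products\<close>

lemma internal_dir_prodD:
  assumes "internal_dir_prod G T I N"
  shows internal_dir_prod_subgroup: "\<And>i. i \<in> I \<Longrightarrow> subgroup (T i) G"
    and internal_dir_prod_factors_commute:
      "\<And>i j x y. i \<in> I \<Longrightarrow> j \<in> I \<Longrightarrow> i \<noteq> j \<Longrightarrow> x \<in> T i \<Longrightarrow> y \<in> T j \<Longrightarrow> x \<otimes> y = y \<otimes> x"
    and internal_dir_prod_independent: "\<And>i. i \<in> I \<Longrightarrow> T i \<inter> prod_of G T (I - {i}) = {\<one>}"
    and internal_dir_prod_eq: "N = prod_of G T I"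
  using assms unfolding internal_dir_prod_def by simp_all

lemma internal_dir_prod_commute:
  assumes idp: "internal_dir_prod G T I N"
    and "J \<subseteq> I" "J' \<subseteq> I" "J \<inter> J' = {}"
    and "x \<in> prod_of G T J" "y \<in> prod_of G T J'"
  shows "x \<otimes> y = y \<otimes> x"
proof (rule generate_commute)
  show "(\<Union>j\<in>J. T j) \<subseteq> carrier G" "(\<Union>j\<in>J'. T j) \<subseteq> carrier G"
    using assms(2,3) internal_dir_prod_subgroup[OF idp] subgroup.subset by blast+
  fix a b assume "a \<in> (\<Union>j\<in>J. T j)" "b \<in> (\<Union>j\<in>J'. T j)"
  then obtain i j where "i \<in> J" "j \<in> J'" "a \<in> T i" "b \<in> T j"
    by blast
  moreover have "i \<noteq> j" "i \<in> I" "j \<in> I"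
    using calculation assms(2-4) by blast+
  ultimately show "a \<otimes> b = b \<otimes> a"
    using internal_dir_prod_factors_commute[OF idp] by blast
qed (use assms(5,6) in \<open>simp_all add: prod_of_def\<close>)

lemma internal_dir_prod_Un:
  assumes idp: "internal_dir_prod G T I N" and "J \<subseteq> I" "J' \<subseteq> I" "J \<inter> J' = {}"
  shows "prod_of G T (J \<union> J') = prod_of G T J <#> prod_of G T J'"
proof (rule prod_of_Un)
  show "\<And>j. j \<in> J \<union> J' \<Longrightarrow> subgroup (T j) G"
    using internal_dir_prod_subgroup[OF idp] assms(2,3) by blast
  show "x \<otimes> y = y \<otimes> x" if "i \<in> J" "j \<in> J'" "x \<in> T i" "y \<in> T j" for i j x y
  proof (rule internal_dir_prod_factors_commute[OF idp])
    show "i \<in> I" "j \<in> I" "i \<noteq> j"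
      using that(1,2) assms(2-4) by blast+
  qed (use that in simp_all)
qed

lemma internal_dir_prod_inter:
  assumes idp: "internal_dir_prod G T I N"
    and "finite J" "J \<subseteq> I" "J' \<subseteq> I" "J \<inter> J' = {}"
  shows "prod_of G T J \<inter> prod_of G T J' = {\<one>}"
  using assms(2-5)
proof (induction J rule: finite_induct)
  case empty
  then show ?case using one_in_prod_of[of T J'] by auto
next
  case (insert a J)
  have aI: "a \<in> I" and JI: "J \<subseteq> I"
    using insert.prems(1) by auto
  have sub: "subgroup (prod_of G T A) G" if "A \<subseteq> I" for A
    using internal_dir_prod_subgroup[OF idp] that by (intro prod_of_subgroup) blast
  have "prod_of G T (insert a J) = T a <#> prod_of G T J"
  proof -
    have "prod_of G T ({a} \<union> J) = prod_of G T {a} <#> prod_of G T J"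
      by (rule internal_dir_prod_Un[OF idp]) (use aI JI insert.hyps(2) in auto)
    then show ?thesis
      using prod_of_singleton[of T a] internal_dir_prod_subgroup[OF idp aI] by simp
  qed
  moreover have "(T a <#> prod_of G T J) \<inter> prod_of G T J' = {\<one>}"
  proof (rule set_mult_inter_trivial)
    show "subgroup (T a) G"
      using internal_dir_prod_subgroup[OF idp aI] .
    show "subgroup (prod_of G T J) G" "subgroup (prod_of G T J') G"
      using sub[OF JI] sub[OF insert.prems(2)] .
    show "subgroup (prod_of G T (I - {a})) G"
      by (rule sub) blast
    show "prod_of G T J \<subseteq> prod_of G T (I - {a})"
      using JI insert.hyps(2) by (intro prod_of_mono) blast
    show "prod_of G T J' \<subseteq> prod_of G T (I - {a})"
      using insert.prems(2,3) by (intro prod_of_mono) blast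
    show "T a \<inter> prod_of G T (I - {a}) = {\<one>}"
      using internal_dir_prod_independent[OF idp aI] .
    show "prod_of G T J \<inter> prod_of G T J' = {\<one>}"
      by (rule insert.IH) (use insert.prems in auto)
  qed
  ultimately show ?case
    by simp
qed

lemma internal_dir_prod_blocks_insert:
  assumes idp: "internal_dir_prod G T I N"
    and blocks: "\<And>j. j \<in> insert a J \<Longrightarrow> B j \<subseteq> I"
    and disj: "\<And>j. j \<in> J \<Longrightarrow> B a \<inter> B j = {}"
    and sub: "\<And>j. j \<in> insert a J \<Longrightarrow> subgroup (W j) G"
    and in_block: "\<And>j. j \<in> insert a J \<Longrightarrow> W j \<subseteq> prod_of G T (B j)"
  shows "prod_of G W (insert a J) = W a <#> prod_of G W J"
proof (rule prod_of_insert[OF sub])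
  show "x \<otimes> y = y \<otimes> x" if "j \<in> J" "x \<in> W a" "y \<in> W j" for j x y
  proof (rule internal_dir_prod_commute[OF idp])
    show "B a \<subseteq> I" "B j \<subseteq> I" "B a \<inter> B j = {}"
      using blocks disj that(1) by blast+
    show "x \<in> prod_of G T (B a)" "y \<in> prod_of G T (B j)"
      using in_block that by blast+
  qed
qed

section \<open>Complements\<close>

lemma complementary_subset:
  assumes "complementary G P D Q" "subgroup D G" "subgroup Q G"
  shows "D \<subseteq> P" "Q \<subseteq> P"
proof -
  have P: "D <#> Q = P"
    using assms(1) unfolding complementary_def by blast
  show "D \<subseteq> P"
  proof
    fix d assume d: "d \<in> D"
    have "d \<otimes> \<one> \<in> P"
      using set_multI[OF d subgroup.one_closed[OF assms(3)]] P by simp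
    then show "d \<in> P"
      using subgroup.mem_carrier[OF assms(2) d] by simp
  qed
  show "Q \<subseteq> P"
  proof
    fix q assume q: "q \<in> Q"
    have "\<one> \<otimes> q \<in> P"
      using set_multI[OF subgroup.one_closed[OF assms(2)] q] P by simp
    then show "q \<in> P"
      using subgroup.mem_carrier[OF assms(3) q] by simp
  qed
qed

lemma complementary_set_mult:
  assumes P: "subgroup P G" "subgroup P' G" and PP': "P \<inter> P' = {\<one>}"
    and comm: "\<And>x y. x \<in> P \<Longrightarrow> y \<in> P' \<Longrightarrow> x \<otimes> y = y \<otimes> x"
    and sub: "subgroup D G" "subgroup Q G" "subgroup D' G" "subgroup Q' G"
    and compl: "complementary G P D Q" "complementary G P' D' Q'"
  shows "complementary G (P <#> P') (D <#> D') (Q <#> Q')"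
proof -
  interpret PP': group_disjoint_sum G P P'
    using P by (simp add: group_disjoint_sum_def group_axioms)
  have in_P: "D \<subseteq> P" "Q \<subseteq> P" "D' \<subseteq> P'" "Q' \<subseteq> P'"
    using complementary_subset compl sub by blast+
  have carr: "D \<subseteq> carrier G" "Q \<subseteq> carrier G" "D' \<subseteq> carrier G" "Q' \<subseteq> carrier G"
    using sub subgroup.subset by blast+
  have swap: "D' <#> Q = Q <#> D'"
    using in_P comm by (intro set_mult_commute_elementwise) (metis subsetD)
  have "(D <#> D') <#> (Q <#> Q') = D <#> ((D' <#> Q) <#> Q')"
    using carr by (simp add: set_mult_assoc set_mult_closed)
  also have "\<dots> = D <#> ((Q <#> D') <#> Q')"
    by (simp only: swap)
  also have "\<dots> = (D <#> Q) <#> (D' <#> Q')"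
    using carr by (simp add: set_mult_assoc set_mult_closed)
  also have "\<dots> = P <#> P'"
    using compl unfolding complementary_def by simp
  finally have prod: "(D <#> D') <#> (Q <#> Q') = P <#> P'" .
  have "z = \<one>" if z: "z \<in> D <#> D'" "z \<in> Q <#> Q'" for z
  proof -
    obtain d d' q q' where dq: "d \<in> D" "d' \<in> D'" "q \<in> Q" "q' \<in> Q'"
      and "z = d \<otimes> d'" "z = q \<otimes> q'"
      using z by (metis set_multE)
    moreover have "\<forall>x\<in>P. \<forall>y\<in>P'. \<forall>x'\<in>P. \<forall>y'\<in>P'. x \<otimes> y = x' \<otimes> y' \<longrightarrow> x = x' \<and> y = y'"
      using PP'.cancel PP' by simp
    ultimately have "d = q" "d' = q'"
      using in_P by (metis subsetD)+
    then have "d = \<one>" "d' = \<one>"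
      using compl dq unfolding complementary_def by blast+
    then show "z = \<one>"
      using \<open>z = d \<otimes> d'\<close> by simp
  qed
  moreover have "\<one> \<in> D <#> D'" "\<one> \<in> Q <#> Q'"
    using set_multI[OF subgroup.one_closed[OF sub(1)] subgroup.one_closed[OF sub(3)]]
      set_multI[OF subgroup.one_closed[OF sub(2)] subgroup.one_closed[OF sub(4)]] by simp_all
  ultimately show ?thesis
    unfolding complementary_def using prod by blast
qed

lemma complementary_prod_of_blocks:
  assumes idp: "internal_dir_prod G T I N" and "finite I" and "finite J"
    and "\<And>j. j \<in> J \<Longrightarrow> B j \<subseteq> I"
    and "\<And>i j. i \<in> J \<Longrightarrow> j \<in> J \<Longrightarrow> i \<noteq> j \<Longrightarrow> B i \<inter> B j = {}"
    and "\<And>j. j \<in> J \<Longrightarrow> subgroup (D j) G" "\<And>j. j \<in> J \<Longrightarrow> subgroup (Q j) G"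
    and "\<And>j. j \<in> J \<Longrightarrow> complementary G (prod_of G T (B j)) (D j) (Q j)"
  shows "complementary G (prod_of G T (\<Union>j\<in>J. B j)) (prod_of G D J) (prod_of G Q J)"
  using assms(3-)
proof (induction J rule: finite_induct)
  case empty
  then show ?case by (simp add: complementary_def set_mult_def)
next
  case (insert a J)
  let ?U = "\<Union>j\<in>J. B j"
  have Ba: "B a \<subseteq> I" and U: "?U \<subseteq> I" and disjU: "B a \<inter> ?U = {}"
    using insert.prems(1,2) insert.hyps(2) by blast+
  have subT: "\<And>i. i \<in> I \<Longrightarrow> subgroup (T i) G"
    using internal_dir_prod_subgroup[OF idp] .
  have disj_a: "\<And>j. j \<in> J \<Longrightarrow> B a \<inter> B j = {}"
    using insert.prems(2) insert.hyps(2) by blast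
  have in_block: "D j \<subseteq> prod_of G T (B j)" "Q j \<subseteq> prod_of G T (B j)" if "j \<in> insert a J" for j
    using complementary_subset insert.prems(3-5) that by blast+
  have "prod_of G T (B a \<union> ?U) = prod_of G T (B a) <#> prod_of G T ?U"
    using internal_dir_prod_Un[OF idp Ba U disjU] .
  moreover have "prod_of G D (insert a J) = D a <#> prod_of G D J"
    by (rule internal_dir_prod_blocks_insert[where W = D, OF idp insert.prems(1) disj_a
          insert.prems(3) in_block(1)])
  moreover have "prod_of G Q (insert a J) = Q a <#> prod_of G Q J"
    by (rule internal_dir_prod_blocks_insert[where W = Q, OF idp insert.prems(1) disj_a
          insert.prems(4) in_block(2)])
  moreover have "complementary G (prod_of G T (B a) <#> prod_of G T ?U)
      (D a <#> prod_of G D J) (Q a <#> prod_of G Q J)"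
  proof (rule complementary_set_mult)
    show "subgroup (prod_of G T (B a)) G" "subgroup (prod_of G T ?U) G"
      using subT Ba U by (auto intro!: prod_of_subgroup)
    show "prod_of G T (B a) \<inter> prod_of G T ?U = {\<one>}"
      using internal_dir_prod_inter[OF idp _ Ba U disjU] finite_subset[OF Ba \<open>finite I\<close>] by blast
    show "\<And>x y. x \<in> prod_of G T (B a) \<Longrightarrow> y \<in> prod_of G T ?U \<Longrightarrow> x \<otimes> y = y \<otimes> x"
      using internal_dir_prod_commute[OF idp Ba U disjU] .
    show "subgroup (D a) G" "subgroup (Q a) G"
      using insert.prems(3,4) by blast+
    show "subgroup (prod_of G D J) G" "subgroup (prod_of G Q J) G"
      using insert.prems(3,4) by (auto intro!: prod_of_subgroup)
    show "complementary G (prod_of G T (B a)) (D a) (Q a)"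
      using insert.prems(5) by blast
    show "complementary G (prod_of G T ?U) (prod_of G D J) (prod_of G Q J)"
      by (rule insert.IH) (use insert.prems in auto)
  qed
  ultimately show ?case by simp
qed

section \<open>Complements of point stabilizers in the socle\<close>

lemma full_diagonal_complementary:
  "full_diagonal G T B D \<Longrightarrow> i \<in> B \<Longrightarrow> complementary G (prod_of G T B) D (prod_of G T (B - {i}))"
  unfolding full_diagonal_def complementary_def by blast

lemma nonabelian_simple_subgroup_nontrivial:
  "nonabelian_simple_subgroup G A \<Longrightarrow> \<exists>x\<in>A. x \<noteq> \<one>"
  unfolding nonabelian_simple_subgroup_def by metis

lemma internal_dir_prod_nontrivial:
  assumes "internal_dir_prod G T I N" "i \<in> I" "nonabelian_simple_subgroup G (T i)"
  shows "N \<noteq> {\<one>}"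
proof -
  obtain x where "x \<in> T i" "x \<noteq> \<one>"
    using nonabelian_simple_subgroup_nontrivial assms(3) by blast
  moreover have "T i \<subseteq> N"
    using subset_prod_of[OF assms(2)] internal_dir_prod_eq[OF assms(1)] by simp
  ultimately show ?thesis by blast
qed

lemma socle_normal: "socle G \<lhd> G"
  unfolding socle_def
proof (rule normal_generateI)
  show "\<Union>{N. minimal_normal G N} \<subseteq> carrier G"
    by (auto simp: minimal_normal_def intro: subgroup.mem_carrier[OF normal_imp_subgroup])
  show "g \<otimes> h \<otimes> inv g \<in> \<Union>{N. minimal_normal G N}"
    if "h \<in> \<Union>{N. minimal_normal G N}" "g \<in> carrier G" for g h
    using that by (auto simp: minimal_normal_def intro: normal.inv_op_closed2)
qed

lemma type_SD_socle_complement: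
  assumes "type_SD G \<Omega> \<phi>" and "\<alpha> \<in> \<Omega>"
  obtains K where "socle G \<noteq> {\<one>}" "subgroup K G" "K \<subseteq> socle G"
    "complementary G (socle G) (socle G \<inter> stabilizer G \<phi> \<alpha>) K"
proof -
  obtain k :: nat and T where k: "k \<ge> 2" and simple: "\<forall>i<k. nonabelian_simple_subgroup G (T i)"
    and idp: "internal_dir_prod G T {..<k} (socle G)"
    and diag: "full_diagonal G T {..<k} (socle G \<inter> stabilizer G \<phi> \<alpha>)"
    using assms unfolding type_SD_def by blast
  have socle: "socle G = prod_of G T {..<k}"
    using internal_dir_prod_eq[OF idp] .
  have k0: "0 \<in> {..<k}"
    using k by simp
  show ?thesis
  proof (rule that)
    show "socle G \<noteq> {\<one>}"
      using internal_dir_prod_nontrivial[OF idp k0] simple k0 by simp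
    show "subgroup (prod_of G T ({..<k} - {0})) G"
      using internal_dir_prod_subgroup[OF idp] by (intro prod_of_subgroup) blast
    show "prod_of G T ({..<k} - {0}) \<subseteq> socle G"
      unfolding socle by (rule prod_of_mono) blast
    show "complementary G (socle G) (socle G \<inter> stabilizer G \<phi> \<alpha>) (prod_of G T ({..<k} - {0}))"
      unfolding socle using full_diagonal_complementary[OF diag k0] by (simp add: socle)
  qed
qed

lemma full_diagonal_blocks_complement:
  fixes l :: nat
  assumes idp: "internal_dir_prod G T I N" and "finite I"
    and blocks: "\<forall>j<l. B j \<subseteq> I \<and> B j \<noteq> {}"
    and disj: "\<forall>j<l. \<forall>j'<l. j \<noteq> j' \<longrightarrow> B j \<inter> B j' = {}"
    and cover: "(\<Union>j<l. B j) = I"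
    and diag: "\<forall>j<l. full_diagonal G T (B j) (D j)"
  obtains K where "subgroup K G" "K \<subseteq> N" "complementary G N (prod_of G D {..<l}) K"
proof -
  have "\<forall>j<l. \<exists>i. i \<in> B j"
    using blocks by blast
  then obtain c where c: "\<And>j. j < l \<Longrightarrow> c j \<in> B j"
    by metis
  define K where "K = prod_of G (\<lambda>j. prod_of G T (B j - {c j})) {..<l}"
  have sub_D: "subgroup (D j) G" if "j < l" for j
    using diag that unfolding full_diagonal_def by blast
  have sub_T: "subgroup (prod_of G T A) G" if "A \<subseteq> I" for A
    using internal_dir_prod_subgroup[OF idp] that by (intro prod_of_subgroup) blast
  have sub_K: "subgroup K G"
    unfolding K_def by (rule prod_of_subgroup, rule sub_T) (use blocks in blast)
  have "complementary G (prod_of G T (\<Union>j<l. B j)) (prod_of G D {..<l}) K"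
    unfolding K_def
  proof (rule complementary_prod_of_blocks[OF idp \<open>finite I\<close>])
    show "\<And>j. j \<in> {..<l} \<Longrightarrow> B j \<subseteq> I"
      using blocks by simp
    show "\<And>i j. i \<in> {..<l} \<Longrightarrow> j \<in> {..<l} \<Longrightarrow> i \<noteq> j \<Longrightarrow> B i \<inter> B j = {}"
      using disj by simp
    show "\<And>j. j \<in> {..<l} \<Longrightarrow> subgroup (D j) G"
      using sub_D by simp
    show "\<And>j. j \<in> {..<l} \<Longrightarrow> subgroup (prod_of G T (B j - {c j})) G"
      using blocks by (intro sub_T) auto
    show "\<And>j. j \<in> {..<l} \<Longrightarrow>
        complementary G (prod_of G T (B j)) (D j) (prod_of G T (B j - {c j}))"
      using full_diagonal_complementary diag c by (metis lessThan_iff)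
  qed simp
  then have compl: "complementary G N (prod_of G D {..<l}) K"
    using cover internal_dir_prod_eq[OF idp] by simp
  moreover have "subgroup (prod_of G D {..<l}) G"
    using sub_D by (intro prod_of_subgroup) simp
  then have "K \<subseteq> N"
    using complementary_subset(2)[OF compl _ sub_K] by blast
  ultimately show ?thesis
    using that sub_K by blast
qed

lemma type_CD_socle_complement:
  assumes "type_CD G \<Omega> \<phi>" and "\<alpha> \<in> \<Omega>"
  obtains K where "socle G \<noteq> {\<one>}" "subgroup K G" "K \<subseteq> socle G"
    "complementary G (socle G) (socle G \<inter> stabilizer G \<phi> \<alpha>) K"
proof -
  obtain k l :: nat and T B D where simple: "\<forall>i<k. nonabelian_simple_subgroup G (T i)"
    and idp: "internal_dir_prod G T {..<k} (socle G)"
    and "l \<ge> 2" "l dvd k"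
    and block_size: "k div l \<ge> 2" "\<forall>j<l. B j \<subseteq> {..<k} \<and> card (B j) = k div l"
    and disj: "\<forall>j<l. \<forall>j'<l. j \<noteq> j' \<longrightarrow> B j \<inter> B j' = {}"
    and cover: "(\<Union>j<l. B j) = {..<k}"
    and diag: "\<forall>j<l. full_diagonal G T (B j) (D j)"
    and stab: "socle G \<inter> stabilizer G \<phi> \<alpha> = prod_of G D {..<l}"
    using assms unfolding type_CD_def by metis
  have "\<forall>j<l. B j \<subseteq> {..<k} \<and> B j \<noteq> {}"
    using block_size by (metis card.empty not_numeral_le_zero)
  then obtain K where "subgroup K G" "K \<subseteq> socle G"
    "complementary G (socle G) (socle G \<inter> stabilizer G \<phi> \<alpha>) K"
    using full_diagonal_blocks_complement[OF idp _ _ disj cover diag] stab by auto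
  moreover have "socle G \<noteq> {\<one>}"
  proof (rule internal_dir_prod_nontrivial[OF idp])
    have "0 < k"
      using block_size(1) by (cases "k = 0") auto
    then show "0 \<in> {..<k}" "nonabelian_simple_subgroup G (T 0)"
      using simple by auto
  qed
  ultimately show ?thesis
    using that by blast
qed

section \<open>Perfect codes\<close>

lemma cayley_adj_subgroup_iff:
  assumes K: "subgroup K G"
  shows "cayley_adj G (K - {\<one>}) x y \<longleftrightarrow>
    x \<in> carrier G \<and> y \<in> carrier G \<and> x \<noteq> y \<and> x \<otimes> inv y \<in> K"
proof
  assume adj: "cayley_adj G (K - {\<one>}) x y"
  then have xy: "x \<in> carrier G" "y \<in> carrier G"
    unfolding cayley_adj_def by auto
  from adj obtain s where s: "s \<in> K" "s \<noteq> \<one>" and "y = s \<otimes> x \<or> x = s \<otimes> y"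
    unfolding cayley_adj_def by blast
  then consider "y = s \<otimes> x" | "x = s \<otimes> y" by blast
  then show "x \<in> carrier G \<and> y \<in> carrier G \<and> x \<noteq> y \<and> x \<otimes> inv y \<in> K"
  proof cases
    case 1
    then have "x \<otimes> inv y = inv s"
      using xy s(1) subgroup.mem_carrier[OF K] by (simp add: inv_mult_group m_assoc[symmetric])
    moreover have "x \<noteq> y"
      using 1 s xy subgroup.mem_carrier[OF K] by (metis r_cancel_one')
    ultimately show ?thesis
      using xy s(1) subgroup.m_inv_closed[OF K] by simp
  next
    case 2
    then have "x \<otimes> inv y = s"
      using xy s(1) subgroup.mem_carrier[OF K] by (simp add: m_assoc)
    moreover have "x \<noteq> y"
      using 2 s xy subgroup.mem_carrier[OF K] by (metis r_cancel_one')
    ultimately show ?thesis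
      using xy s(1) by simp
  qed
next
  assume "x \<in> carrier G \<and> y \<in> carrier G \<and> x \<noteq> y \<and> x \<otimes> inv y \<in> K"
  then have xy: "x \<in> carrier G" "y \<in> carrier G" "x \<noteq> y" and k: "x \<otimes> inv y \<in> K"
    by auto
  have "x \<otimes> inv y \<noteq> \<one>"
    using xy by (metis inv_equality inv_inv inv_closed)
  moreover have "x = (x \<otimes> inv y) \<otimes> y"
    using xy by (simp add: m_assoc)
  ultimately show "cayley_adj G (K - {\<one>}) x y"
    using xy k unfolding cayley_adj_def by blast
qed

lemma mult_inv_mem_trivial_inter_imp_eq:
  assumes H: "subgroup H G" and KH: "K \<inter> H = {\<one>}"
    and "h \<in> H" "c \<in> H" "h \<otimes> inv c \<in> K"
  shows "c = h"
proof -
  have carr: "h \<in> carrier G" "c \<in> carrier G"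
    using assms(3,4) subgroup.mem_carrier[OF H] by auto
  have "h \<otimes> inv c \<in> H"
    using assms(3,4) subgroup.m_closed[OF H] subgroup.m_inv_closed[OF H] by blast
  then have "h \<otimes> inv c = \<one>"
    using assms(5) KH by blast
  then have "inv (inv c) = h"
    using carr by (intro inv_equality) simp_all
  then show "c = h"
    using carr by simp
qed

lemma complementary_unique_neighbour:
  assumes H: "subgroup H G" and K: "subgroup K G" and compl: "complementary G (carrier G) K H"
    and v: "v \<in> carrier G - H"
  shows "\<exists>!c. c \<in> H \<and> cayley_adj G (K - {\<one>}) v c"
proof -
  have KH: "K <#> H = carrier G" "K \<inter> H = {\<one>}"
    using compl unfolding complementary_def by auto
  have "v \<in> K <#> H"
    using v KH(1) by simp
  then obtain k h where k: "k \<in> K" and h: "h \<in> H" and vkh: "v = k \<otimes> h"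
    by (rule set_multE)
  have carr: "k \<in> carrier G" "h \<in> carrier G"
    using subgroup.mem_carrier[OF K k] subgroup.mem_carrier[OF H h] .
  have "v \<otimes> inv h = k"
    using vkh carr by (simp add: m_assoc)
  then have "cayley_adj G (K - {\<one>}) v h"
    using v h carr k by (auto simp: cayley_adj_subgroup_iff[OF K])
  moreover have "c = h" if "c \<in> H" "cayley_adj G (K - {\<one>}) v c" for c
  proof (rule mult_inv_mem_trivial_inter_imp_eq[OF H KH(2) h that(1)])
    have vc: "v \<otimes> inv c \<in> K" "c \<in> carrier G"
      using that(2) by (auto simp: cayley_adj_subgroup_iff[OF K])
    have "h \<otimes> inv c = inv k \<otimes> (v \<otimes> inv c)"
      using vkh carr vc(2) by (simp add: m_assoc[symmetric])
    then show "h \<otimes> inv c \<in> K"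
      using subgroup.m_closed[OF K subgroup.m_inv_closed[OF K k] vc(1)] by simp
  qed
  ultimately show ?thesis
    using h by blast
qed

lemma complementary_imp_subgroup_perfect_code:
  assumes H: "subgroup H G" and K: "subgroup K G" and compl: "complementary G (carrier G) K H"
  shows "subgroup_perfect_code G H"
proof -
  let ?S = "K - {\<one>}"
  have S: "?S \<subseteq> carrier G - {\<one>}"
    using subgroup.subset[OF K] by blast
  have S_inv: "inv s \<in> ?S" if "s \<in> ?S" for s
    using that subgroup.m_inv_closed[OF K] subgroup.mem_carrier[OF K] by (auto simp: inv_eq_1_iff)
  have "K \<inter> H = {\<one>}"
    using compl unfolding complementary_def by auto
  then have independent: "\<not> cayley_adj G ?S x y" if "x \<in> H" "y \<in> H" for x y
    using mult_inv_mem_trivial_inter_imp_eq[OF H _ that] by (auto simp: cayley_adj_subgroup_iff[OF K])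
  have "perfect_code_graph (carrier G) (cayley_adj G ?S) H"
    unfolding perfect_code_graph_def
    using subgroup.subset[OF H] independent complementary_unique_neighbour[OF H K compl] by blast
  then show ?thesis
    unfolding subgroup_perfect_code_def using H S S_inv by blast
qed

end

section \<open>Point stabilizers\<close>

context group_action
begin

lemma transitive_subgroup_mult_stabilizer:
  assumes N: "subgroup N G" and x: "x \<in> E"
    and trans: "\<And>y. y \<in> E \<Longrightarrow> \<exists>n\<in>N. \<phi> n x = y"
  shows "N <#> stabilizer G \<phi> x = carrier G"
proof
  interpret group G
    using group_hom group_hom.axioms(1) by blast
  show "N <#> stabilizer G \<phi> x \<subseteq> carrier G"
    using set_mult_closed[OF subgroup.subset[OF N] stabilizer_subset] .
  show "carrier G \<subseteq> N <#> stabilizer G \<phi> x"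
  proof
    fix g assume g: "g \<in> carrier G"
    obtain n where n: "n \<in> N" and "\<phi> n x = \<phi> g x"
      using trans element_image[OF g x] by blast
    have nc: "n \<in> carrier G"
      using subgroup.mem_carrier[OF N n] .
    have "\<phi> (inv n \<otimes> g) x = \<phi> (inv n) (\<phi> n x)"
      using composition_rule[OF x _ g] nc \<open>\<phi> n x = \<phi> g x\<close> by simp
    also have "\<dots> = x"
      using orbit_sym_aux[OF nc x] by simp
    finally have "inv n \<otimes> g \<in> stabilizer G \<phi> x"
      unfolding stabilizer_def using nc g by simp
    then have "n \<otimes> (inv n \<otimes> g) \<in> N <#> stabilizer G \<phi> x"
      by (rule set_multI[OF n])
    moreover have "n \<otimes> (inv n \<otimes> g) = g"
      using nc g by (simp add: m_assoc[symmetric])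
    ultimately show "g \<in> N <#> stabilizer G \<phi> x"
      by simp
  qed
qed

lemma complementary_stabilizer:
  assumes N: "subgroup N G" and x: "x \<in> E"
    and trans: "\<And>y. y \<in> E \<Longrightarrow> \<exists>n\<in>N. \<phi> n x = y"
    and K: "subgroup K G" "K \<subseteq> N" and compl: "complementary G N (N \<inter> stabilizer G \<phi> x) K"
  shows "complementary G (carrier G) K (stabilizer G \<phi> x)"
proof -
  interpret group G
    using group_hom group_hom.axioms(1) by blast
  let ?H = "stabilizer G \<phi> x"
  have H: "subgroup ?H G"
    using stabilizer_subgroup[OF x] .
  have "K \<inter> ?H \<subseteq> {\<one>}"
    using compl K(2) unfolding complementary_def by blast
  then have "K \<inter> ?H = {\<one>}"
    using subgroup.one_closed[OF K(1)] subgroup.one_closed[OF H] by blast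
  moreover have "carrier G \<subseteq> K <#> ?H"
  proof
    fix g assume "g \<in> carrier G"
    then have "g \<in> N <#> ?H"
      using transitive_subgroup_mult_stabilizer[OF N x trans] by simp
    then obtain n h where n: "n \<in> N" and h: "h \<in> ?H" and g: "g = n \<otimes> h"
      by (rule set_multE)
    have "inv n \<in> (N \<inter> ?H) <#> K"
      using compl subgroup.m_inv_closed[OF N n] unfolding complementary_def by simp
    then obtain d k where d: "d \<in> N \<inter> ?H" and k: "k \<in> K" and "inv n = d \<otimes> k"
      by (rule set_multE)
    have carr: "n \<in> carrier G" "d \<in> carrier G" "k \<in> carrier G" "h \<in> carrier G"
      using n d k h subgroup.mem_carrier[OF N] subgroup.mem_carrier[OF K(1)]
        subgroup.mem_carrier[OF H] by auto
    have "inv (inv n) = inv (d \<otimes> k)"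
      using \<open>inv n = d \<otimes> k\<close> by simp
    then have "n = inv k \<otimes> inv d"
      using carr by (simp add: inv_mult_group)
    then have "g = inv k \<otimes> (inv d \<otimes> h)"
      using g carr by (simp add: m_assoc)
    moreover have "inv d \<otimes> h \<in> ?H"
      using d h subgroup.m_closed[OF H] subgroup.m_inv_closed[OF H] by blast
    ultimately show "g \<in> K <#> ?H"
      using set_multI[OF subgroup.m_inv_closed[OF K(1) k]] by simp
  qed
  moreover have "K <#> ?H \<subseteq> carrier G"
    using set_mult_closed[OF subgroup.subset[OF K(1)] stabilizer_subset] .
  ultimately show ?thesis
    unfolding complementary_def by blast
qed

end

theorem lemma5p3:
  fixes G :: "('g, 'b) monoid_scheme" and \<Omega> :: "'c set" and \<phi> :: "'g \<Rightarrow> 'c \<Rightarrow> 'c"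
    and \<alpha> :: 'c
  assumes "faithful_action G \<Omega> \<phi>"
    and "finite \<Omega>"
    and "finite (carrier G)"
    and "quasiprimitive G \<Omega> \<phi>"
    and "type_SD G \<Omega> \<phi> \<or> type_CD G \<Omega> \<phi>"
    and "\<alpha> \<in> \<Omega>"
  shows "subgroup_perfect_code G (stabilizer G \<phi> \<alpha>)"
proof -
  interpret group_action G \<Omega> \<phi>
    using assms(1) faithful_action.axioms(1) by blast
  interpret group G
    using group_hom group_hom.axioms(1) by blast
  obtain K where nontrivial: "socle G \<noteq> {\<one>\<^bsub>G\<^esub>}" and K: "subgroup K G" "K \<subseteq> socle G"
    and compl: "complementary G (socle G) (socle G \<inter> stabilizer G \<phi> \<alpha>) K"
    using assms(5) by (elim disjE type_SD_socle_complement[OF _ assms(6)]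
        type_CD_socle_complement[OF _ assms(6)]) blast+
  have "\<forall>x\<in>\<Omega>. \<forall>y\<in>\<Omega>. \<exists>n\<in>socle G. \<phi> n x = y"
    using assms(4) socle_normal nontrivial unfolding quasiprimitive_def by blast
  then have "complementary G (carrier G) K (stabilizer G \<phi> \<alpha>)"
    using complementary_stabilizer[OF normal_imp_subgroup[OF socle_normal] assms(6) _ K compl]
      assms(6) by blast
  then show ?thesis
    using complementary_imp_subgroup_perfect_code[OF stabilizer_subgroup[OF assms(6)] K(1)] by blast
qed

end
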